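(* Let $X$ be a compact metric space and $f\colon X\to X$ a continuous map. Assume there is a sequence of closed sets $X_1\subseteq X_2\subseteq\cdots$ in $X$ with $f(X_i)\subseteq X_i$ for all $i$, $X=\bigcup_{i=1}^\infty X_i$, and $f|_{X_i}\colon X_i\to X_i$ generically chaotic for every $i$. Then $f$ is generically chaotic.
   Context: For continuous $g$ on a compact metric space $(Y,d)$, $(x,y)\in Y^2$ is a Li-Yorke pair if $\liminf_n d(g^n(x),g^n(y))=0$ and $\limsup_n d(g^n(x),g^n(y))>0$; $g$ is generically chaotic if the set of Li-Yorke pairs is residual in $Y^2$. *)

theory Defs
  imports "HOL-Analysis.Analysis" "HOL-Library.Liminf_Limsup"
begin

definition li_yorke_pair :: "('a::metric_space \<Rightarrow> 'a) \<Rightarrow> 'a \<Rightarrow> 'a \<Rightarrow> bool" where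
  "li_yorke_pair g x y \<longleftrightarrow>
     liminf (\<lambda>n. ereal (dist ((g ^^ n) x) ((g ^^ n) y))) = 0 \<and>
     limsup (\<lambda>n. ereal (dist ((g ^^ n) x) ((g ^^ n) y))) > 0"

definition residual_in :: "'b::topological_space set \<Rightarrow> 'b set \<Rightarrow> bool" where
  "residual_in Z S \<longleftrightarrow> S \<subseteq> Z \<and>
     (\<exists>\<F>. countable \<F> \<and> (\<forall>U\<in>\<F>. openin (top_of_set Z) U \<and> Z \<subseteq> closure U)
          \<and> Z \<inter> \<Inter>\<F> \<subseteq> S)"

definition generically_chaotic_on :: "'a::metric_space set \<Rightarrow> ('a \<Rightarrow> 'a) \<Rightarrow> bool" where
  "generically_chaotic_on Y g \<longleftrightarrow>
     residual_in (Y \<times> Y) {(x, y). x \<in> Y \<and> y \<in> Y \<and> li_yorke_pair g x y}"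

end

theory Submission
  imports Defs
begin

text \<open>Residuality can be checked on a countable closed cover: a dense open subset V of a closed
  piece C, enlarged by the open complement of C, is dense and open in the whole space, and the
  countably many sets obtained this way from all pieces witness residuality there. The Li-Yorke
  pairs of f in Xs i are those of X lying in Xs i \<times> Xs i, and since the Xs i increase these
  squares cover X \<times> X.\<close>

lemma openin_Un_Diff_closedin:
  assumes "openin (top_of_set C) V" and "closedin (top_of_set Z) C"
  shows "openin (top_of_set Z) (V \<union> (Z - C))"
proof -
  obtain T where "open T" and V: "V = C \<inter> T"
    using assms(1) by (auto simp: openin_open)
  have "C \<subseteq> Z"
    using assms(2) by (rule closedin_imp_subset)
  then have "V \<union> (Z - C) = (Z \<inter> T) \<union> (Z - C)"
    using V by blast
  moreover have "openin (top_of_set Z) (Z \<inter> T)"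
    using \<open>open T\<close> by (auto simp: openin_open)
  moreover have "openin (top_of_set Z) (Z - C)"
    using assms(2) by (simp add: closedin_def)
  ultimately show ?thesis
    by (simp add: openin_Un)
qed

lemma dense_Un_Diff:
  assumes "C \<subseteq> closure V"
  shows "Z \<subseteq> closure (V \<union> (Z - C))"
  using assms closure_subset[of "Z - C"] by auto

lemma residual_in_countable_closedin_cover:
  fixes C :: "'i \<Rightarrow> 'a::topological_space set"
  assumes "countable I"
    and "\<And>i. i \<in> I \<Longrightarrow> closedin (top_of_set Z) (C i)"
    and "Z = (\<Union>i\<in>I. C i)"
    and "\<And>i. i \<in> I \<Longrightarrow> residual_in (C i) (S \<inter> C i)"
    and "S \<subseteq> Z"
  shows "residual_in Z S"
proof -
  have "\<exists>F. countable F \<and> (\<forall>V\<in>F. openin (top_of_set (C i)) V \<and> C i \<subseteq> closure V)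
          \<and> C i \<inter> \<Inter>F \<subseteq> S" if "i \<in> I" for i
    using assms(4)[OF that] unfolding residual_in_def by (meson le_infE)
  then obtain F where "\<forall>i\<in>I. countable (F i) \<and>
      (\<forall>V\<in>F i. openin (top_of_set (C i)) V \<and> C i \<subseteq> closure V) \<and> C i \<inter> \<Inter>(F i) \<subseteq> S"
    by (metis bchoice)
  then have F_countable: "\<And>i. i \<in> I \<Longrightarrow> countable (F i)"
    and F_open_dense: "\<And>i V. i \<in> I \<Longrightarrow> V \<in> F i \<Longrightarrow>
           openin (top_of_set (C i)) V \<and> C i \<subseteq> closure V"
    and F_Inter: "\<And>i. i \<in> I \<Longrightarrow> C i \<inter> \<Inter>(F i) \<subseteq> S"
    by blast+
  define G where "G = (\<Union>i\<in>I. (\<lambda>V. V \<union> (Z - C i)) ` F i)"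
  have "countable G"
    unfolding G_def using assms(1) F_countable by auto
  moreover have "openin (top_of_set Z) U \<and> Z \<subseteq> closure U" if "U \<in> G" for U
  proof -
    from \<open>U \<in> G\<close> obtain i V where "i \<in> I" "V \<in> F i" "U = V \<union> (Z - C i)"
      unfolding G_def by blast
    then show ?thesis
      using F_open_dense assms(2) openin_Un_Diff_closedin dense_Un_Diff by metis
  qed
  moreover have "Z \<inter> \<Inter>G \<subseteq> S"
  proof
    fix z assume z: "z \<in> Z \<inter> \<Inter>G"
    then obtain i where "i \<in> I" and "z \<in> C i"
      using assms(3) by blast
    moreover have "z \<in> V" if "V \<in> F i" for V
    proof -
      have "V \<union> (Z - C i) \<in> G"
        using \<open>V \<in> F i\<close> \<open>i \<in> I\<close> unfolding G_def by blast
      then show ?thesis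
        using z \<open>z \<in> C i\<close> by blast
    qed
    ultimately show "z \<in> S"
      using F_Inter by blast
  qed
  ultimately show ?thesis
    using assms(5) unfolding residual_in_def by blast
qed

lemma Times_Union_incseq:
  fixes A :: "nat \<Rightarrow> 'a set"
  assumes "\<And>i. A i \<subseteq> A (Suc i)"
  shows "(\<Union>i. A i) \<times> (\<Union>i. A i) = (\<Union>i. A i \<times> A i)"
proof -
  have mono: "A i \<subseteq> A j" if "i \<le> j" for i j
    using lift_Suc_mono_le[of A, OF assms that] .
  show ?thesis
  proof
    show "(\<Union>i. A i) \<times> (\<Union>i. A i) \<subseteq> (\<Union>i. A i \<times> A i)"
    proof clarify
      fix x y i j assume "x \<in> A i" "y \<in> A j"
      then have "(x, y) \<in> A (max i j) \<times> A (max i j)"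
        using mono[of i "max i j"] mono[of j "max i j"] by auto
      then show "(x, y) \<in> (\<Union>i. A i \<times> A i)"
        by blast
    qed
  qed blast
qed

theorem lemma34:
  fixes X :: "'a::metric_space set" and f :: "'a \<Rightarrow> 'a" and Xs :: "nat \<Rightarrow> 'a set"
  assumes "compact X"
    and "continuous_on X f" and "f ` X \<subseteq> X"
    and "\<And>i. closed (Xs i)" and "\<And>i. Xs i \<subseteq> X"
    and "\<And>i. Xs i \<subseteq> Xs (Suc i)"
    and "\<And>i. f ` (Xs i) \<subseteq> Xs i"
    and "X = (\<Union>i. Xs i)"
    and "\<And>i. generically_chaotic_on (Xs i) f"
  shows "generically_chaotic_on X f"
proof -
  let ?LY = "\<lambda>Z. {(x, y). x \<in> Z \<and> y \<in> Z \<and> li_yorke_pair f x y}"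
  have closed_squares: "closedin (top_of_set (X \<times> X)) (Xs i \<times> Xs i)" for i
    using assms(4,5) by (intro closed_subset closed_Times) auto
  have cover: "X \<times> X = (\<Union>i. Xs i \<times> Xs i)"
    using Times_Union_incseq[of Xs, OF assms(6)] assms(8) by simp
  have "?LY X \<inter> (Xs i \<times> Xs i) = ?LY (Xs i)" for i
    using assms(5) by blast
  then have residual_squares: "residual_in (Xs i \<times> Xs i) (?LY X \<inter> (Xs i \<times> Xs i))" for i
    using assms(9) unfolding generically_chaotic_on_def by simp
  have "residual_in (X \<times> X) (?LY X)"
    by (rule residual_in_countable_closedin_cover[OF _ closed_squares cover residual_squares]) auto
  then show ?thesis
    unfolding generically_chaotic_on_def .
qed

end
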